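(* For every integer $k\ge 2$, the Zielonka graph $\vec Z_k$ is splitable: there is an oriented graph $\vec T$ on $k\cdot 2^{k-2}$ vertices such that $\vec Z_k$ is isomorphic to the anti-twinned graph $R(\vec T)$.
   Context: For $k\ge 1$ the Zielonka graph $\vec Z_k$ has vertex set $S_1\cup\dots\cup S_k$, where $S_i$ is the set of $k$-tuples $x=(x^1,\dots,x^k)$ with $x^i=*$ and $x^j\in\{0,1\}$ for $j\neq i$ (so $\vec Z_k$ has $k\cdot 2^{k-1}$ vertices). For $x\in S_i$ and $y\in S_j$ with $i\neq j$, there is an arc $xy$ if and only if either ($i<j$ and $x^j=y^i$) or ($i>j$ and $x^j\neq y^i$); there are no other arcs. Given an oriented graph $\vec T$ with vertex set $\{v_1,\dots,v_n\}$, its anti-twinned graph $R(\vec T)$ is the oriented graph with vertex set $\{v_1,\dots,v_n\}\cup\{v_1',\dots,v_n'\}$ and arc set $\{v_iv_j,\ v_i'v_j',\ v_jv_i',\ v_j'v_i : v_iv_j\text{ an arc of }\vec T\}$. An oriented graph is splitable if it is isomorphic to $R(\vec T)$ for some oriented graph $\vec T$. *)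

theory Defs
  imports Main
begin

definition oriented_graph :: "'a set \<Rightarrow> ('a \<times> 'a) set \<Rightarrow> bool" where
  "oriented_graph V A \<longleftrightarrow> finite V \<and> A \<subseteq> V \<times> V
     \<and> (\<forall>x. (x, x) \<notin> A) \<and> (\<forall>x y. (x, y) \<in> A \<longrightarrow> (y, x) \<notin> A)"

definition digraph_iso :: "'a set \<Rightarrow> ('a \<times> 'a) set \<Rightarrow> 'b set \<Rightarrow> ('b \<times> 'b) set \<Rightarrow> bool" where
  "digraph_iso V1 A1 V2 A2 \<longleftrightarrow> (\<exists>f. bij_betw f V1 V2 \<and>
     (\<forall>x\<in>V1. \<forall>y\<in>V1. (x, y) \<in> A1 \<longleftrightarrow> (f x, f y) \<in> A2))"

text \<open>A k-tuple over {0,1,*} is a list of length k of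
  bool option (None = *); coordinates are indexed 0..k-1 instead of 1..k.\<close>

definition zS :: "nat \<Rightarrow> nat \<Rightarrow> bool option list set" where
  "zS k i = {x. length x = k \<and> x ! i = None \<and> (\<forall>j<k. j \<noteq> i \<longrightarrow> x ! j \<noteq> None)}"

definition zielonka_verts :: "nat \<Rightarrow> bool option list set" where
  "zielonka_verts k = (\<Union>i<k. zS k i)"

definition zielonka_arcs :: "nat \<Rightarrow> (bool option list \<times> bool option list) set" where
  "zielonka_arcs k = {(x, y). \<exists>i<k. \<exists>j<k. i \<noteq> j \<and> x \<in> zS k i \<and> y \<in> zS k j \<and>
      ((i < j \<and> x ! j = y ! i) \<or> (j < i \<and> x ! j \<noteq> y ! i))}"

text \<open>Anti-twinned graph R(T): vertex (v, False) is v, vertex (v, True) is v'.\<close>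

definition anti_twin_verts :: "'a set \<Rightarrow> ('a \<times> bool) set" where
  "anti_twin_verts V = V \<times> UNIV"

definition anti_twin_arcs :: "('a \<times> 'a) set \<Rightarrow> (('a \<times> bool) \<times> ('a \<times> bool)) set" where
  "anti_twin_arcs A =
     {((v, False), (w, False)) | v w. (v, w) \<in> A}
   \<union> {((v, True), (w, True)) | v w. (v, w) \<in> A}
   \<union> {((w, False), (v, True)) | v w. (v, w) \<in> A}
   \<union> {((w, True), (v, False)) | v w. (v, w) \<in> A}"

end

theory Submission
  imports Defs "HOL-Library.Countable"
begin

text \<open>Negating every non-star coordinate is a fixed-point-free involution \<open>\<sigma>\<close> of
  \<open>Z\<^sub>k\<close> with \<open>xy\<close> an arc iff \<open>\<sigma>(y)x\<close> is one. In any oriented graph with such an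
  involution, pick one vertex out of every pair \<open>{x, \<sigma>(x)}\<close> and let \<open>T\<close> be the subgraph
  they induce; then \<open>x \<mapsto> x\<close> on the chosen vertices and \<open>x \<mapsto> \<sigma>(x)'\<close> on the others
  is an isomorphism onto \<open>R(T)\<close>. Since \<open>T\<close> has half of the \<open>k\<cdot>2\<^sup>k\<^sup>-\<^sup>1\<close> vertices of
  \<open>Z\<^sub>k\<close>, it has \<open>k\<cdot>2\<^sup>k\<^sup>-\<^sup>2\<close>.\<close>

lemma anti_twin_arcs_iff:
  "((a, False), (b, False)) \<in> anti_twin_arcs A \<longleftrightarrow> (a, b) \<in> A"
  "((a, True), (b, True)) \<in> anti_twin_arcs A \<longleftrightarrow> (a, b) \<in> A"
  "((a, False), (b, True)) \<in> anti_twin_arcs A \<longleftrightarrow> (b, a) \<in> A"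
  "((a, True), (b, False)) \<in> anti_twin_arcs A \<longleftrightarrow> (b, a) \<in> A"
  by (auto simp: anti_twin_arcs_def)

lemma card_anti_twin_verts: "card (anti_twin_verts V) = 2 * card V"
  by (simp add: anti_twin_verts_def card_cartesian_product)

lemma oriented_graph_induced_image:
  assumes "oriented_graph V A" and "R \<subseteq> V" and "inj_on e R"
  shows "oriented_graph (e ` R) (map_prod e e ` (A \<inter> R \<times> R))"
  using assms finite_subset unfolding oriented_graph_def
  by (auto simp: inj_on_eq_iff[OF assms(3)])

lemma digraph_iso_anti_twin_of_involution:
  assumes s_V: "\<And>x. x \<in> V \<Longrightarrow> s x \<in> V"
    and s_s: "\<And>x. x \<in> V \<Longrightarrow> s (s x) = x"
    and arc_s: "\<And>x y. x \<in> V \<Longrightarrow> y \<in> V \<Longrightarrow> (x, y) \<in> A \<longleftrightarrow> (s y, x) \<in> A"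
    and R_V: "R \<subseteq> V"
    and R_choice: "\<And>x. x \<in> V \<Longrightarrow> x \<in> R \<longleftrightarrow> s x \<notin> R"
    and inj_e: "inj_on e R"
  shows "digraph_iso V A (anti_twin_verts (e ` R)) (anti_twin_arcs (map_prod e e ` (A \<inter> R \<times> R)))"
proof -
  define B where "B = map_prod e e ` (A \<inter> R \<times> R)"
  have B_iff: "(e x, e y) \<in> B \<longleftrightarrow> (x, y) \<in> A" if "x \<in> R" "y \<in> R" for x y
    using that by (auto simp: B_def inj_on_eq_iff[OF inj_e])
  have arc_ss: "(x, y) \<in> A \<longleftrightarrow> (s x, s y) \<in> A" if "x \<in> V" "y \<in> V" for x y
    using arc_s[OF that] arc_s[OF s_V[OF that(2)] that(1)] by simp
  define f where "f x = (if x \<in> R then (e x, False) else (e (s x), True))" for x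
  have inj_f: "inj_on f V"
  proof (rule inj_onI)
    fix x y assume "x \<in> V" "y \<in> V" "f x = f y"
    then show "x = y"
      using R_choice s_s by (auto simp: f_def inj_on_eq_iff[OF inj_e] split: if_splits) metis
  qed
  have "f ` V = anti_twin_verts (e ` R)"
  proof
    show "f ` V \<subseteq> anti_twin_verts (e ` R)"
      using R_choice s_V by (auto simp: f_def anti_twin_verts_def)
    show "anti_twin_verts (e ` R) \<subseteq> f ` V"
    proof
      fix p assume "p \<in> anti_twin_verts (e ` R)"
      then obtain r b where p: "p = (e r, b)" "r \<in> R" by (auto simp: anti_twin_verts_def)
      with R_V have "r \<in> V" by blast
      show "p \<in> f ` V"
      proof (cases b)
        case False
        with p \<open>r \<in> V\<close> show ?thesis by (force simp: f_def)
      next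
        case True
        have "s r \<notin> R" "s (s r) = r" using R_choice s_s \<open>r \<in> V\<close> p(2) by auto
        with p True have "f (s r) = p" by (simp add: f_def)
        with s_V \<open>r \<in> V\<close> show ?thesis by blast
      qed
    qed
  qed
  with inj_f have bij: "bij_betw f V (anti_twin_verts (e ` R))"
    by (simp add: bij_betw_def)
  have "(x, y) \<in> A \<longleftrightarrow> (f x, f y) \<in> anti_twin_arcs B" if x: "x \<in> V" and y: "y \<in> V" for x y
  proof -
    have s_R: "s z \<in> R" if "z \<in> V" "z \<notin> R" for z using R_choice that by blast
    show ?thesis
      using x y arc_s[OF x y] arc_s[OF y s_V[OF x]] arc_ss[OF x y] s_s s_V
      by (cases "x \<in> R"; cases "y \<in> R")
         (simp_all add: f_def anti_twin_arcs_iff B_iff s_R)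
  qed
  with bij show ?thesis
    unfolding digraph_iso_def B_def by blast
qed

definition zielonka_flip :: "bool option list \<Rightarrow> bool option list" where
  "zielonka_flip x = map (map_option Not) x"

lemma zielonka_flip_flip [simp]: "zielonka_flip (zielonka_flip x) = x"
  by (simp add: zielonka_flip_def comp_def option.map_comp option.map_ident)

lemma length_zielonka_flip [simp]: "length (zielonka_flip x) = length x"
  by (simp add: zielonka_flip_def)

lemma nth_zielonka_flip [simp]: "i < length x \<Longrightarrow> zielonka_flip x ! i = map_option Not (x ! i)"
  by (simp add: zielonka_flip_def)

lemma zielonka_flip_in_zS_iff [simp]: "i < k \<Longrightarrow> zielonka_flip x \<in> zS k i \<longleftrightarrow> x \<in> zS k i"
  by (auto simp: zS_def)

lemma zielonka_flip_in_verts: "x \<in> zielonka_verts k \<Longrightarrow> zielonka_flip x \<in> zielonka_verts k"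
  by (auto simp: zielonka_verts_def)

lemma zS_unique: "x \<in> zS k i \<Longrightarrow> x \<in> zS k j \<Longrightarrow> i < k \<Longrightarrow> j < k \<Longrightarrow> i = j"
  by (auto simp: zS_def)

lemma zielonka_arc_imp_flip_arc:
  assumes "(x, y) \<in> zielonka_arcs k"
  shows "(zielonka_flip y, x) \<in> zielonka_arcs k"
proof -
  obtain i j where ij: "i < k" "j < k" "i \<noteq> j" "x \<in> zS k i" "y \<in> zS k j"
    and arc: "(i < j \<and> x ! j = y ! i) \<or> (j < i \<and> x ! j \<noteq> y ! i)"
    using assms unfolding zielonka_arcs_def by auto
  have "x ! j \<noteq> None" "y ! i \<noteq> None" "length y = k"
    using ij by (auto simp: zS_def)
  with ij arc have flip_arc: "(j < i \<and> zielonka_flip y ! i = x ! j) \<or> (i < j \<and> zielonka_flip y ! i \<noteq> x ! j)"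
    by (auto simp: option.map_sel)
  show ?thesis
    unfolding zielonka_arcs_def mem_Collect_eq prod.case
    using ij flip_arc by (intro exI[of _ j] conjI exI[of _ i]) auto
qed

lemma zielonka_arc_iff_flip_arc:
  "(x, y) \<in> zielonka_arcs k \<longleftrightarrow> (zielonka_flip y, x) \<in> zielonka_arcs k"
proof
  assume "(zielonka_flip y, x) \<in> zielonka_arcs k"
  then have "(zielonka_flip x, zielonka_flip y) \<in> zielonka_arcs k"
    by (rule zielonka_arc_imp_flip_arc)
  then have "(y, zielonka_flip x) \<in> zielonka_arcs k"
    using zielonka_arc_imp_flip_arc by fastforce
  then show "(x, y) \<in> zielonka_arcs k"
    using zielonka_arc_imp_flip_arc by fastforce
qed (rule zielonka_arc_imp_flip_arc)

lemma finite_zielonka_verts: "finite (zielonka_verts k)"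
proof (rule finite_subset)
  show "zielonka_verts k \<subseteq> {x. set x \<subseteq> UNIV \<and> length x = k}"
    by (auto simp: zielonka_verts_def zS_def)
qed (rule finite_lists_length_eq, simp)

lemma oriented_graph_zielonka: "oriented_graph (zielonka_verts k) (zielonka_arcs k)"
  unfolding oriented_graph_def
proof (intro conjI allI impI)
  show "zielonka_arcs k \<subseteq> zielonka_verts k \<times> zielonka_verts k"
    by (auto simp: zielonka_arcs_def zielonka_verts_def)
  show "(x, x) \<notin> zielonka_arcs k" for x
    by (auto simp: zielonka_arcs_def zS_def)
  show "(y, x) \<notin> zielonka_arcs k" if "(x, y) \<in> zielonka_arcs k" for x y
  proof
    obtain i j where "i < k" "j < k" "x \<in> zS k i" "y \<in> zS k j"
      "(i < j \<and> x ! j = y ! i) \<or> (j < i \<and> x ! j \<noteq> y ! i)"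
      using \<open>(x, y) \<in> zielonka_arcs k\<close> unfolding zielonka_arcs_def by auto
    moreover assume "(y, x) \<in> zielonka_arcs k"
    then obtain j' i' where "j' < k" "i' < k" "y \<in> zS k j'" "x \<in> zS k i'"
      "(j' < i' \<and> y ! i' = x ! j') \<or> (i' < j' \<and> y ! i' \<noteq> x ! j')"
      unfolding zielonka_arcs_def by auto
    ultimately show False
      using zS_unique[of x k i i'] zS_unique[of y k j j'] by auto
  qed
qed (rule finite_zielonka_verts)

definition insert_star :: "nat \<Rightarrow> bool list \<Rightarrow> bool option list" where
  "insert_star i bs = take i (map Some bs) @ None # drop i (map Some bs)"

lemma bij_betw_insert_star:
  assumes "i < k"
  shows "bij_betw (insert_star i) {bs. length bs = k - 1} (zS k i)"
proof (rule bij_betw_byWitness[where f' = "\<lambda>x. map the (take i x @ drop (Suc i) x)"])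
  show "\<forall>bs\<in>{bs. length bs = k - 1}. map the (take i (insert_star i bs) @ drop (Suc i) (insert_star i bs)) = bs"
    using assms by (auto simp: insert_star_def map_idI)
  show "\<forall>x\<in>zS k i. insert_star i (map the (take i x @ drop (Suc i) x)) = x"
  proof
    fix x assume x: "x \<in> zS k i"
    then have "\<forall>z\<in>set (take i x @ drop (Suc i) x). z \<noteq> None"
      using assms by (auto simp: zS_def in_set_conv_nth nth_append min_def)
    then have "map Some (map the (take i x @ drop (Suc i) x)) = take i x @ drop (Suc i) x"
      by (auto intro!: map_idI)
    then have "insert_star i (map the (take i x @ drop (Suc i) x)) = take i x @ x ! i # drop (Suc i) x"
      using x assms by (simp add: insert_star_def zS_def min_def)
    also have "\<dots> = x"
      using x assms id_take_nth_drop[of i x] by (simp add: zS_def)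
    finally show "insert_star i (map the (take i x @ drop (Suc i) x)) = x" .
  qed
  show "insert_star i ` {bs. length bs = k - 1} \<subseteq> zS k i"
    using assms by (auto simp: zS_def insert_star_def nth_append min_def nth_Cons')
  show "(\<lambda>x. map the (take i x @ drop (Suc i) x)) ` zS k i \<subseteq> {bs. length bs = k - 1}"
    using assms by (auto simp: zS_def)
qed

lemma card_zS: "i < k \<Longrightarrow> card (zS k i) = 2 ^ (k - 1)"
  using bij_betw_same_card[OF bij_betw_insert_star] card_lists_length_eq[of "UNIV :: bool set"]
  by simp

lemma card_zielonka_verts: "card (zielonka_verts k) = k * 2 ^ (k - 1)"
proof -
  have "finite (zS k i)" if "i < k" for i
    using finite_zielonka_verts by (rule finite_subset[rotated]) (use that in \<open>auto simp: zielonka_verts_def\<close>)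
  then have "card (zielonka_verts k) = (\<Sum>i<k. card (zS k i))"
    unfolding zielonka_verts_def by (intro card_UN_disjoint) (auto simp: zS_def)
  also have "\<dots> = k * 2 ^ (k - 1)"
    by (simp add: card_zS)
  finally show ?thesis .
qed

text \<open>The pivot is the first non-star coordinate; its value, which the flip negates,
  selects one vertex out of each pair \<open>{x, \<sigma>(x)}\<close>.\<close>

definition zielonka_pivot :: "bool option list \<Rightarrow> nat" where
  "zielonka_pivot x = (if x ! 0 = None then 1 else 0)"

definition zielonka_reps :: "nat \<Rightarrow> bool option list set" where
  "zielonka_reps k = {x \<in> zielonka_verts k. x ! zielonka_pivot x = Some False}"

lemma zielonka_pivot_not_star:
  assumes "k \<ge> 2" and "x \<in> zielonka_verts k"
  shows "zielonka_pivot x < k" and "x ! zielonka_pivot x \<noteq> None"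
proof -
  obtain i where i: "i < k" "x \<in> zS k i"
    using assms(2) by (auto simp: zielonka_verts_def)
  then have not_star: "j < k \<Longrightarrow> j \<noteq> i \<Longrightarrow> x ! j \<noteq> None" for j
    by (simp add: zS_def)
  show "zielonka_pivot x < k"
    using assms(1) by (simp add: zielonka_pivot_def)
  show "x ! zielonka_pivot x \<noteq> None"
  proof (cases "x ! 0 = None")
    case True
    with not_star assms(1) have "i = 0" by fastforce
    with True not_star assms(1) show ?thesis by (simp add: zielonka_pivot_def)
  next
    case False
    then show ?thesis by (auto simp: zielonka_pivot_def)
  qed
qed

lemma zielonka_reps_choice:
  assumes "k \<ge> 2" and "x \<in> zielonka_verts k"
  shows "x \<in> zielonka_reps k \<longleftrightarrow> zielonka_flip x \<notin> zielonka_reps k"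
proof -
  have "length x = k"
    using assms(2) by (auto simp: zielonka_verts_def zS_def)
  with assms have "zielonka_pivot (zielonka_flip x) = zielonka_pivot x"
    by (simp add: zielonka_pivot_def)
  with assms \<open>length x = k\<close> zielonka_pivot_not_star[OF assms] show ?thesis
    by (auto simp: zielonka_reps_def zielonka_flip_in_verts)
qed

theorem mainTheorem7:
  fixes k :: nat
  assumes "k \<ge> 2"
  shows "\<exists>(V :: nat set) A. oriented_graph V A \<and> card V = k * 2 ^ (k - 2) \<and>
           digraph_iso (zielonka_verts k) (zielonka_arcs k)
                       (anti_twin_verts V) (anti_twin_arcs A)"
proof (intro exI conjI)
  let ?R = "zielonka_reps k"
  have "inj_on to_nat ?R" by simp
  have "?R \<subseteq> zielonka_verts k" by (auto simp: zielonka_reps_def)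
  show "oriented_graph (to_nat ` ?R) (map_prod to_nat to_nat ` (zielonka_arcs k \<inter> ?R \<times> ?R))"
    using oriented_graph_zielonka \<open>?R \<subseteq> zielonka_verts k\<close> \<open>inj_on to_nat ?R\<close>
    by (rule oriented_graph_induced_image)
  show iso: "digraph_iso (zielonka_verts k) (zielonka_arcs k) (anti_twin_verts (to_nat ` ?R))
      (anti_twin_arcs (map_prod to_nat to_nat ` (zielonka_arcs k \<inter> ?R \<times> ?R)))"
    using zielonka_flip_in_verts zielonka_flip_flip zielonka_arc_iff_flip_arc
      \<open>?R \<subseteq> zielonka_verts k\<close> zielonka_reps_choice[OF assms] \<open>inj_on to_nat ?R\<close>
    by (rule digraph_iso_anti_twin_of_involution)
  then have "k * 2 ^ (k - 1) = 2 * card (to_nat ` ?R)"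
    unfolding digraph_iso_def
    by (metis bij_betw_same_card card_anti_twin_verts card_zielonka_verts)
  moreover have "(2::nat) ^ (k - 1) = 2 * 2 ^ (k - 2)"
  proof -
    obtain m where "k = Suc (Suc m)"
      using assms by (metis add_2_eq_Suc le_Suc_ex)
    then show ?thesis by simp
  qed
  ultimately show "card (to_nat ` ?R) = k * 2 ^ (k - 2)"
    by simp
qed

end
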